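(* For every coloring $c:S^1\to\{R,B\}$ there exists a distinguishing coloring $c^*:S^1\to\{R,B\}$ such that $c(x)\neq c^*(x)$ for at most three points $x\in S^1$.
   Context: The group $O(2)$ of isometries of the unit circle $S^1$ (rotations and reflections) acts on $S^1$. A coloring $c:S^1\to\{R,B\}$ is distinguishing if no non-identity $\gamma\in O(2)$ satisfies $c\circ\gamma=c$. *)

theory Defs
  imports "HOL-Analysis.Analysis"
begin

datatype color = R | B

abbreviation S1 :: "complex set" where "S1 \<equiv> sphere 0 1"

definition O2 :: "(complex \<Rightarrow> complex) set" where
  "O2 = {g. \<exists>a. norm a = 1 \<and> (g = (\<lambda>z. a * z) \<or> g = (\<lambda>z. a * cnj z))}"

text \<open>A coloring c : S^1 \<rightarrow> {R,B} (only values on S^1 matter) is distinguishing if no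
  element of O(2) acting non-trivially on S^1 preserves it.\<close>
definition distinguishing :: "(complex \<Rightarrow> color) \<Rightarrow> bool" where
  "distinguishing c \<longleftrightarrow>
     (\<forall>g\<in>O2. (\<forall>x\<in>S1. c (g x) = c x) \<longrightarrow> (\<forall>x\<in>S1. g x = x))"

end

theory Submission
  imports Defs
begin

(* Idea: recolor a triple F = {x, y, z} that is "rigid" in a suitable finite set X \<supseteq> F, i.e.
   each of its three distances occurs in X only once. An element of O(2) mapping X into
   itself then fixes x, y, z and is the identity. So it suffices to find such F for which
   every symmetry g of the recolored coloring maps X into X. Any such g is an
   almost-symmetry of c: it changes the color of only finitely many points.

   Case 1: c has countably many almost-symmetries. Choose F outside the countable union of
   their defect sets; then no symmetry of the recoloring moves a point of F out of F.
   Case 2: c has uncountably many almost-symmetries, hence two multiplicatively independent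
   almost-rotations a1, a2. Along each orbit of the free Z^2-action they generate, c is
   constant up to finitely many points. Let D be the finite set of points disagreeing with
   the dominant color of their orbit and take F disjoint from D: since almost-symmetries
   respect dominant colors, every symmetry of the recoloring preserves X = D \<union> F. *)

lemma uncountable_S1: "uncountable S1"
  by (rule connected_uncountable[of _ 1 "-1"]) (auto intro: connected_sphere)

lemma uncountable_avoid:
  assumes "uncountable A" "countable C"
  shows "\<exists>a\<in>A. a \<notin> C"
proof -
  have "A - C \<noteq> {}" using uncountable_minus_countable[OF assms] by force
  then show ?thesis by blast
qed

lemma finite_level_set_S1:
  fixes q :: complex
  assumes "q \<noteq> 0"
  shows "finite {w\<in>S1. Re (q * w) = t}"
proof -
  let ?s = "t / cmod q"
  let ?V = "{Complex ?s (sqrt (1 - ?s^2)), Complex ?s (- sqrt (1 - ?s^2))}"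
  have "{w\<in>S1. Re (q * w) = t} \<subseteq> (\<lambda>v. v * of_real (cmod q) / q) ` ?V"
  proof
    fix w assume w: "w \<in> {w\<in>S1. Re (q * w) = t}"
    define v where "v = q * w / of_real (cmod q)"
    have nq: "cmod q > 0" using assms by simp
    have "cmod v = 1" using w nq by (simp add: v_def norm_mult norm_divide)
    then have "(Re v)^2 + (Im v)^2 = 1" by (simp add: cmod_def)
    moreover have rv: "Re v = ?s" using w by (simp add: v_def)
    ultimately have "(Im v)^2 = 1 - ?s^2" by simp
    then have "sqrt (1 - ?s^2) = \<bar>Im v\<bar>" by (metis real_sqrt_abs)
    then have "v \<in> ?V" using rv by (auto simp: complex_eq_iff abs_if split: if_splits)
    moreover have "w = v * of_real (cmod q) / q" using nq assms by (simp add: v_def)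
    ultimately show "w \<in> (\<lambda>v. v * of_real (cmod q) / q) ` ?V" by blast
  qed
  then show ?thesis by (rule finite_subset) simp
qed

lemma dist_sq_S1:
  assumes "x \<in> S1" "w \<in> S1"
  shows "(cmod (w - x))^2 = 2 - 2 * Re (cnj x * w)"
proof -
  have "(cmod (w - x))^2 = (Re w - Re x)^2 + (Im w - Im x)^2" by (simp add: cmod_def)
  moreover have "(Re x)^2 + (Im x)^2 = 1" "(Re w)^2 + (Im w)^2 = 1"
    using assms by (simp_all add: cmod_def)
  ultimately show ?thesis by (simp add: power2_eq_square algebra_simps)
qed

lemma finite_circle_S1:
  assumes "u \<in> S1"
  shows "finite {w\<in>S1. cmod (w - u) = r}"
proof -
  have "{w\<in>S1. cmod (w - u) = r} \<subseteq> {w\<in>S1. Re (cnj u * w) = (2 - r^2) / 2}"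
    using assms dist_sq_S1[of u] by auto
  moreover have "cnj u \<noteq> 0" using assms by auto
  ultimately show ?thesis using finite_level_set_S1 finite_subset by blast
qed

lemma finite_bisector_S1:
  assumes "u \<in> S1" "v \<in> S1" "u \<noteq> v"
  shows "finite {w\<in>S1. cmod (w - u) = cmod (w - v)}"
proof -
  have "{w\<in>S1. cmod (w - u) = cmod (w - v)} \<subseteq> {w\<in>S1. Re ((cnj u - cnj v) * w) = 0}"
  proof safe
    fix w assume "w \<in> S1" "cmod (w - u) = cmod (w - v)"
    then show "Re ((cnj u - cnj v) * w) = 0"
      using dist_sq_S1[of u w] dist_sq_S1[of v w] assms by (simp add: algebra_simps)
  qed
  moreover have "cnj u - cnj v \<noteq> 0" using assms by auto
  ultimately show ?thesis using finite_level_set_S1 finite_subset by blast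
qed

lemma O2_cases:
  assumes "g \<in> O2"
  obtains a where "cmod a = 1" "g = (\<lambda>z. a * z)"
        | a where "cmod a = 1" "g = (\<lambda>z. a * cnj z)"
  using assms unfolding O2_def by auto

lemma O2_maps_S1: "g \<in> O2 \<Longrightarrow> z \<in> S1 \<Longrightarrow> g z \<in> S1"
  by (erule O2_cases) (auto simp: norm_mult)

lemma O2_inj: "g \<in> O2 \<Longrightarrow> inj g"
  by (erule O2_cases) (auto simp: inj_def)

lemma O2_isometry: "g \<in> O2 \<Longrightarrow> cmod (g u - g v) = cmod (u - v)"
proof (erule O2_cases)
  fix a assume "cmod a = 1" "g = (\<lambda>z. a * z)"
  then show ?thesis by (simp add: norm_mult flip: right_diff_distrib)
next
  fix a assume "cmod a = 1" "g = (\<lambda>z. a * cnj z)"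
  then show ?thesis by (simp add: norm_mult flip: right_diff_distrib complex_cnj_diff)
qed

(* A reflection z \<mapsto> a * cnj z fixing x \<in> S1 has a = x^2; so it fixes only the points \<plusminus>x. *)
lemma reflection_fixed_point:
  assumes "x \<in> S1" "a * cnj x = x"
  shows "a = x * x"
proof -
  have "a = a * (x * cnj x)" using assms(1) complex_norm_square[of x] by simp
  also have "\<dots> = x * x" using assms(2) by (simp add: mult.assoc[symmetric] mult.commute)
  finally show ?thesis .
qed

lemma O2_fix3:
  assumes g: "g \<in> O2" and S: "x \<in> S1" "y \<in> S1" "z \<in> S1" and xyz: "distinct [x, y, z]"
    and fixed: "g x = x" "g y = y" "g z = z"
  shows "g w = w"
  using g
proof (cases rule: O2_cases)
  case (1 a)
  have "x \<noteq> 0" using S by auto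
  then have "a = 1" using fixed 1 by simp
  then show ?thesis using 1 by simp
next
  case (2 a)
  have "a = x * x" "a = y * y" "a = z * z"
    using reflection_fixed_point S fixed 2 by auto
  then have "(y - x) * (y + x) = 0" "(z - x) * (z + x) = 0"
    by (simp_all add: algebra_simps)
  then have "y = - x" "z = - x" using xyz by (auto simp: add_eq_0_iff)
  then show ?thesis using xyz by simp
qed

definition unique_dist :: "complex set \<Rightarrow> complex \<Rightarrow> complex \<Rightarrow> bool" where
  "unique_dist X p q \<longleftrightarrow>
     (\<forall>u\<in>X. \<forall>v\<in>X. u \<noteq> v \<longrightarrow> cmod (u - v) = cmod (p - q) \<longrightarrow> {u, v} = {p, q})"

definition rigid_triple :: "complex set \<Rightarrow> complex \<Rightarrow> complex \<Rightarrow> complex \<Rightarrow> bool" where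
  "rigid_triple X x y z \<longleftrightarrow> x \<in> X \<and> y \<in> X \<and> z \<in> X \<and> distinct [x, y, z] \<and>
     unique_dist X x y \<and> unique_dist X y z \<and> unique_dist X x z"

lemma unique_dist_O2:
  assumes g: "g \<in> O2" "g ` X \<subseteq> X" and pq: "p \<in> X" "q \<in> X" "p \<noteq> q" "unique_dist X p q"
  shows "{g p, g q} = {p, q}"
proof -
  have "g p \<noteq> g q" using O2_inj[OF g(1)] pq(3) by (auto simp: inj_def)
  then show ?thesis using O2_isometry[OF g(1)] g(2) pq unfolding unique_dist_def by blast
qed

lemma rigid_triple_O2:
  assumes g: "g \<in> O2" "g ` X \<subseteq> X" and "X \<subseteq> S1" and T: "rigid_triple X x y z"
  shows "g w = w"
proof -
  have xyz: "x \<in> X" "y \<in> X" "z \<in> X" "distinct [x, y, z]"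
    using T unfolding rigid_triple_def by auto
  have u: "unique_dist X x y" "unique_dist X y z" "unique_dist X x z"
    using T unfolding rigid_triple_def by auto
  have "{g x, g y} = {x, y}" "{g y, g z} = {y, z}" "{g x, g z} = {x, z}"
    using unique_dist_O2[OF g xyz(1,2) _ u(1)] unique_dist_O2[OF g xyz(2,3) _ u(2)]
      unique_dist_O2[OF g xyz(1,3) _ u(3)] xyz(4) by auto
  then have "g x \<in> {x, y} \<inter> {x, z}" "g y \<in> {x, y} \<inter> {y, z}" "g z \<in> {x, z} \<inter> {y, z}"
    by blast+
  then have "g x = x" "g y = y" "g z = z" using xyz(4) by auto
  moreover have "x \<in> S1" "y \<in> S1" "z \<in> S1" using xyz \<open>X \<subseteq> S1\<close> by auto
  ultimately show ?thesis using O2_fix3[OF g(1) _ _ _ xyz(4)] by simp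
qed

definition generic :: "complex set \<Rightarrow> complex \<Rightarrow> bool" where
  "generic X z \<longleftrightarrow> (\<forall>u\<in>X. \<forall>v\<in>X. \<forall>w\<in>X. cmod (z - u) \<noteq> cmod (v - w)) \<and>
     (\<forall>u\<in>X. \<forall>v\<in>X. u \<noteq> v \<longrightarrow> cmod (z - u) \<noteq> cmod (z - v))"

(* A generic point is a new point (take the distance 0 between a point and itself). *)
lemma generic_notin: "generic X z \<Longrightarrow> z \<notin> X"
  unfolding generic_def by fastforce

(* Non-generic points lie on finitely many circles and bisectors, hence form a finite set;
   so a generic point can be chosen outside any prescribed countable set. *)
lemma generic_exists:
  assumes X: "finite X" "X \<subseteq> S1" and P: "countable P"
  shows "\<exists>z\<in>S1 - P. generic X z"
proof -
  define N1 where "N1 = (\<Union>u\<in>X. \<Union>v\<in>X. \<Union>w\<in>X. {z\<in>S1. cmod (z - u) = cmod (v - w)})"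
  define N2 where "N2 = (\<Union>u\<in>X. \<Union>v\<in>X - {u}. {z\<in>S1. cmod (z - u) = cmod (z - v)})"
  have "finite N1" unfolding N1_def using X by (intro finite_UN_I finite_circle_S1) auto
  moreover have "finite N2" unfolding N2_def using X by (intro finite_UN_I finite_bisector_S1) auto
  ultimately have "countable (P \<union> N1 \<union> N2)" using P by (simp add: countable_finite)
  then obtain z where z: "z \<in> S1" "z \<notin> P \<union> N1 \<union> N2"
    using uncountable_avoid[OF uncountable_S1] by blast
  then have "generic X z" unfolding generic_def N1_def N2_def by blast
  then show ?thesis using z by blast
qed

lemma unique_dist_insert_old:
  assumes "unique_dist X p q" "p \<in> X" "q \<in> X" "generic X z"
  shows "unique_dist (insert z X) p q"
  unfolding unique_dist_def
proof (intro ballI impI)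
  fix u v assume uv: "u \<in> insert z X" "v \<in> insert z X" "u \<noteq> v" "cmod (u - v) = cmod (p - q)"
  have new: "cmod (z - w) \<noteq> cmod (p - q)" if "w \<in> X" for w
    using assms(2-4) that unfolding generic_def by blast
  have "u \<noteq> z" using new[of v] uv by auto
  moreover have "v \<noteq> z" using new[of u] uv by (auto simp: norm_minus_commute)
  ultimately show "{u, v} = {p, q}" using assms(1) uv unfolding unique_dist_def by blast
qed

lemma unique_dist_insert_new:
  assumes "p \<in> X" "generic X z"
  shows "unique_dist (insert z X) p z"
  unfolding unique_dist_def
proof (intro ballI impI)
  fix u v assume uv: "u \<in> insert z X" "v \<in> insert z X" "u \<noteq> v" "cmod (u - v) = cmod (p - z)"
  have old: "cmod (z - p) \<noteq> cmod (v - w)" if "v \<in> X" "w \<in> X" for v w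
    using assms that unfolding generic_def by blast
  have distinct: "w = p" if "w \<in> X" "cmod (z - w) = cmod (z - p)" for w
    using assms that unfolding generic_def by blast
  consider "u = z" "v \<in> X" | "v = z" "u \<in> X" | "u \<in> X" "v \<in> X" using uv by auto
  then show "{u, v} = {p, z}"
  proof cases
    case 1
    then show ?thesis using distinct[of v] uv by (auto simp: norm_minus_commute)
  next
    case 2
    then show ?thesis using distinct[of u] uv by (auto simp: norm_minus_commute)
  next
    case 3
    then show ?thesis using old[of u v] uv by (simp add: norm_minus_commute)
  qed
qed

(* Adding three successive generic points to a finite set D yields a rigid triple of the
   enlarged set, avoiding any given countable set P. *)
lemma rigid_triple_exists:
  assumes "finite D" "D \<subseteq> S1" "countable P"
  shows "\<exists>x y z. {x, y, z} \<subseteq> S1 - (P \<union> D) \<and> rigid_triple (D \<union> {x, y, z}) x y z"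
proof -
  obtain x where x: "x \<in> S1 - P" "generic D x"
    using generic_exists assms by blast
  let ?X1 = "insert x D"
  have "finite ?X1" "?X1 \<subseteq> S1" using assms x by auto
  then obtain y where y: "y \<in> S1 - P" "generic ?X1 y"
    using generic_exists assms(3) by blast
  let ?X2 = "insert y ?X1"
  have "finite ?X2" "?X2 \<subseteq> S1" using assms x y by auto
  then obtain z where z: "z \<in> S1 - P" "generic ?X2 z"
    using generic_exists assms(3) by blast
  have X: "D \<union> {x, y, z} = insert z ?X2" by auto
  have "distinct [x, y, z]" "x \<notin> D" "y \<notin> D" "z \<notin> D"
    using generic_notin x(2) y(2) z(2) by auto
  moreover have "unique_dist (insert z ?X2) x y"
    by (intro unique_dist_insert_old unique_dist_insert_new y z) auto
  moreover have "unique_dist (insert z ?X2) x z" "unique_dist (insert z ?X2) y z"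
    by (intro unique_dist_insert_new z; simp)+
  ultimately have "rigid_triple (D \<union> {x, y, z}) x y z" unfolding X rigid_triple_def by simp
  moreover have "{x, y, z} \<subseteq> S1 - (P \<union> D)" using x y z \<open>x \<notin> D\<close> \<open>y \<notin> D\<close> \<open>z \<notin> D\<close> by auto
  ultimately show ?thesis by blast
qed

definition symmetry :: "(complex \<Rightarrow> color) \<Rightarrow> (complex \<Rightarrow> complex) \<Rightarrow> bool" where
  "symmetry c g \<longleftrightarrow> g \<in> O2 \<and> (\<forall>x\<in>S1. c (g x) = c x)"

lemma distinguishing_iff: "distinguishing c \<longleftrightarrow> (\<forall>g. symmetry c g \<longrightarrow> (\<forall>x\<in>S1. g x = x))"
  unfolding distinguishing_def symmetry_def by blast

fun other :: "color \<Rightarrow> color" where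
  "other R = B" | "other B = R"

lemma other_neq [simp]: "other v \<noteq> v" "v \<noteq> other v"
  by (cases v; simp)+

definition recolor :: "(complex \<Rightarrow> color) \<Rightarrow> complex set \<Rightarrow> complex \<Rightarrow> color" where
  "recolor c F z = (if z \<in> F then other (c z) else c z)"

lemma recolor_changes: "F \<subseteq> S1 \<Longrightarrow> {x\<in>S1. c x \<noteq> recolor c F x} = F"
  unfolding recolor_def by auto

definition defect :: "(complex \<Rightarrow> color) \<Rightarrow> (complex \<Rightarrow> complex) \<Rightarrow> complex set" where
  "defect c g = {y\<in>S1. c (g y) \<noteq> c y}"

lemma defect_recolor_symmetry:
  assumes "symmetry (recolor c F) g" "y \<in> S1"
  shows "y \<in> defect c g \<longleftrightarrow> (g y \<in> F \<longleftrightarrow> y \<notin> F)"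
proof -
  have "recolor c F (g y) = recolor c F y" using assms unfolding symmetry_def by blast
  then show ?thesis using assms(2) unfolding defect_def recolor_def
    by (cases "c y"; cases "c (g y)") (auto split: if_splits)
qed

lemma finite_defect_recolor_symmetry:
  assumes g: "symmetry (recolor c F) g" and "finite F"
  shows "finite (defect c g)"
proof -
  have "defect c g \<subseteq> F \<union> g -` F" using defect_recolor_symmetry[OF g] by (auto simp: defect_def)
  moreover have "finite (g -` F)"
    using \<open>finite F\<close> O2_inj g unfolding symmetry_def by (simp add: finite_vimageI)
  ultimately show ?thesis using \<open>finite F\<close> finite_subset by blast
qed

lemma finite_defect_comp:
  assumes h: "h \<in> O2" and "finite (defect c g)" "finite (defect c h)"
  shows "finite (defect c (g \<circ> h))"
proof -
  have "defect c (g \<circ> h) \<subseteq> defect c h \<union> h -` defect c g"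
    using O2_maps_S1[OF h] by (auto simp: defect_def)
  moreover have "finite (h -` defect c g)" using assms O2_inj by (simp add: finite_vimageI)
  ultimately show ?thesis using assms finite_subset by blast
qed

definition almost_sym :: "(complex \<Rightarrow> color) \<Rightarrow> (complex \<Rightarrow> complex) set" where
  "almost_sym c = {g\<in>O2. finite (defect c g)}"

lemma recolor_rigid_triple_distinguishing:
  assumes T: "rigid_triple (D \<union> {x, y, z}) x y z" "D \<union> {x, y, z} \<subseteq> S1"
    and inv: "\<And>g. symmetry (recolor c {x, y, z}) g \<Longrightarrow> g ` (D \<union> {x, y, z}) \<subseteq> D \<union> {x, y, z}"
  shows "distinguishing (recolor c {x, y, z})"
  unfolding distinguishing_iff using rigid_triple_O2 inv T unfolding symmetry_def by blast

(* Case 1: countably many almost-symmetries. Their defects form a countable set; a triple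
   avoiding it cannot be moved by any symmetry of the recoloring. *)
lemma recoloring_if_countable:
  assumes "countable (almost_sym c)"
  shows "\<exists>x y z. {x, y, z} \<subseteq> S1 \<and> distinguishing (recolor c {x, y, z})"
proof -
  define P where "P = (\<Union>g\<in>almost_sym c. defect c g)"
  have "countable P"
    unfolding P_def using assms by (intro countable_UN) (auto simp: almost_sym_def countable_finite)
  then obtain x y z where xyz: "{x, y, z} \<subseteq> S1 - P" and T: "rigid_triple {x, y, z} x y z"
    using rigid_triple_exists[of "{}" P] by auto
  have "g ` {x, y, z} \<subseteq> {x, y, z}" if g: "symmetry (recolor c {x, y, z}) g" for g
  proof (rule image_subsetI, rule ccontr)
    fix w assume w: "w \<in> {x, y, z}" "g w \<notin> {x, y, z}"
    have "g \<in> almost_sym c"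
      using g finite_defect_recolor_symmetry[OF g] unfolding symmetry_def almost_sym_def by simp
    moreover have "w \<in> defect c g" using defect_recolor_symmetry[OF g] w xyz by blast
    ultimately show False using w xyz unfolding P_def by blast
  qed
  then have "distinguishing (recolor c {x, y, z})"
    using recolor_rigid_triple_distinguishing[of "{}"] T xyz by auto
  then show ?thesis using xyz by blast
qed

definition almost_rot :: "(complex \<Rightarrow> color) \<Rightarrow> complex set" where
  "almost_rot c = {a. cmod a = 1 \<and> finite (defect c (\<lambda>z. a * z))}"

(* If there are uncountably many almost-symmetries, there are uncountably many almost-
   rotations: composing a fixed almost-reflection with the others gives almost-rotations. *)
lemma uncountable_almost_rot:
  assumes "uncountable (almost_sym c)"
  shows "uncountable (almost_rot c)"
proof
  assume rot: "countable (almost_rot c)"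
  define Refl where "Refl = {b. cmod b = 1 \<and> finite (defect c (\<lambda>z. b * cnj z))}"
  have "almost_sym c \<subseteq> (\<lambda>a z. a * z) ` almost_rot c \<union> (\<lambda>b z. b * cnj z) ` Refl"
    by (auto simp: almost_sym_def almost_rot_def Refl_def elim!: O2_cases)
  then have "uncountable Refl" using assms rot countable_subset by (metis countable_Un countable_image)
  then obtain b where b: "b \<in> Refl" by (metis countable_empty equals0I)
  have "(\<lambda>a. b * cnj a) ` Refl \<subseteq> almost_rot c"
  proof
    fix r assume "r \<in> (\<lambda>a. b * cnj a) ` Refl"
    then obtain a where a: "a \<in> Refl" "r = b * cnj a" by blast
    have "(\<lambda>z. a * cnj z) \<in> O2" using a unfolding O2_def Refl_def by auto
    then have "finite (defect c ((\<lambda>z. b * cnj z) \<circ> (\<lambda>z. a * cnj z)))"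
      using a b finite_defect_comp unfolding Refl_def by blast
    moreover have "(\<lambda>z. b * cnj z) \<circ> (\<lambda>z. a * cnj z) = (\<lambda>z. r * z)"
      using a by (auto simp: mult.assoc)
    ultimately show "r \<in> almost_rot c" using a b by (simp add: almost_rot_def Refl_def norm_mult)
  qed
  moreover have "inj_on (\<lambda>a. b * cnj a) Refl" using b by (auto simp: Refl_def inj_on_def)
  ultimately have "countable Refl" using rot countable_subset countable_image_inj_on by metis
  then show False using \<open>uncountable Refl\<close> by contradiction
qed

definition power_roots :: "complex \<Rightarrow> complex set" where
  "power_roots a = {z. \<exists>n>0. \<exists>m::int. z ^ n = a powi m}"

lemma countable_power_roots: "countable (power_roots a)"
proof -
  have "countable (\<Union>n\<in>{0<..}. \<Union>m\<in>UNIV. {z. z ^ n = a powi m})"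
    by (intro countable_UN countable_finite[OF finite_nth_roots]) auto
  moreover have "power_roots a = (\<Union>n\<in>{0<..}. \<Union>m\<in>UNIV. {z. z ^ n = a powi m})"
    unfolding power_roots_def by auto
  ultimately show ?thesis by simp
qed

lemma power_int_relation_power_roots:
  fixes a b :: complex
  assumes "a \<noteq> 0" "b \<noteq> 0" "a powi m * b powi n = 1" "n \<noteq> 0"
  shows "b \<in> power_roots a"
proof -
  have "b powi n = inverse (a powi m)"
    using assms(3) by (metis inverse_unique mult.commute)
  then have bn: "b powi n = a powi (- m)" by (simp add: power_int_minus)
  show ?thesis
  proof (cases "n > 0")
    case True
    then have "b ^ nat n = a powi (- m)" using bn by (simp add: power_int_def)
    then show ?thesis using True unfolding power_roots_def by (intro CollectI exI[of _ "nat n"]) auto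
  next
    case False
    then have "b ^ nat (- n) = inverse (b powi n)"
      by (simp add: power_int_def power_inverse)
    also have "\<dots> = a powi m" using bn by (simp add: power_int_minus)
    finally show ?thesis using False assms(4) unfolding power_roots_def
      by (intro CollectI exI[of _ "nat (- n)"]) auto
  qed
qed

lemma independent_pair:
  fixes H :: "complex set"
  assumes "uncountable H"
  shows "\<exists>a1\<in>H. \<exists>a2\<in>H. a1 \<noteq> 0 \<and> a2 \<noteq> 0 \<and>
           (\<forall>m n. a1 powi m * a2 powi n = 1 \<longrightarrow> m = 0 \<and> n = 0)"
proof -
  have countable: "countable (insert 0 (power_roots a))" for a
    by (simp add: countable_power_roots)
  obtain a1 where a1: "a1 \<in> H" "a1 \<noteq> 0" "a1 \<notin> power_roots 1"
    using uncountable_avoid[OF assms countable] by blast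
  obtain a2 where a2: "a2 \<in> H" "a2 \<noteq> 0" "a2 \<notin> power_roots a1"
    using uncountable_avoid[OF assms countable] by blast
  have "m = 0 \<and> n = 0" if rel: "a1 powi m * a2 powi n = 1" for m n
  proof
    show n: "n = 0"
      using power_int_relation_power_roots[OF a1(2) a2(2) rel] a2(3) by blast
    have "1 powi 0 * a1 powi m = 1" using rel n by simp
    then show "m = 0"
      using power_int_relation_power_roots[of 1 a1 0 m] a1(2,3) by auto
  qed
  then show ?thesis using a1 a2 by blast
qed

lemma int_shift_invariant:
  fixes f :: "int \<Rightarrow> 'a"
  assumes "\<And>k. f (k + 1) = f k"
  shows "f a = f b"
proof -
  have "f i = f 0" for i
  proof (induct i rule: int_induct[where k = 0])
    case (step2 i)
    then show ?case using assms[of "i - 1"] by simp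
  qed (use assms in simp_all)
  then show ?thesis by metis
qed

(* A function on Z^2 that is invariant under both unit shifts at all points outside a box
   is constant outside that box (outside the box every row or column is entirely free). *)
lemma constant_outside_box:
  fixes beta :: "int \<Rightarrow> int \<Rightarrow> 'a" and M :: int
  assumes shift1: "\<And>m n. M < \<bar>m\<bar> \<or> M < \<bar>n\<bar> \<Longrightarrow> beta (m + 1) n = beta m n"
      and shift2: "\<And>m n. M < \<bar>m\<bar> \<or> M < \<bar>n\<bar> \<Longrightarrow> beta m (n + 1) = beta m n"
      and outside: "M < \<bar>m\<bar> \<or> M < \<bar>n\<bar>"
  shows "beta m n = beta (M + 1) (M + 1)"
proof -
  have row: "beta m n = beta m' n" if "M < \<bar>n\<bar>" for m m' n
    using int_shift_invariant[of "\<lambda>k. beta k n"] shift1 that by blast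
  have col: "beta m n = beta m n'" if "M < \<bar>m\<bar>" for m n n'
    using int_shift_invariant[of "\<lambda>k. beta m k"] shift2 that by blast
  have "M < \<bar>M + 1\<bar>" using outside by linarith
  then show ?thesis
    using outside row[of n m "M + 1"] col[of "M + 1" n "M + 1"]
      col[of m n "M + 1"] row[of "M + 1" m "M + 1"] by auto
qed

locale independent_almost_rotations =
  fixes c :: "complex \<Rightarrow> color" and a1 a2 :: complex
  assumes a1: "a1 \<in> almost_rot c" and a2: "a2 \<in> almost_rot c"
    and independent: "\<And>m n. a1 powi m * a2 powi n = 1 \<Longrightarrow> m = 0 \<and> n = 0"
begin

definition act :: "int \<Rightarrow> int \<Rightarrow> complex \<Rightarrow> complex" where
  "act m n y = a1 powi m * a2 powi n * y"

definition orbit :: "complex \<Rightarrow> complex set" where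
  "orbit y = (\<lambda>(m, n). act m n y) ` UNIV"

definition cofinitely_red :: "complex set" where
  "cofinitely_red = {y\<in>S1. finite {w\<in>orbit y. c w \<noteq> R}}"

(* The points whose color disagrees with the dominant color of their orbit. *)
definition exceptional :: "complex set" where
  "exceptional = {y\<in>S1. (c y = R) \<noteq> (y \<in> cofinitely_red)}"

definition gen_defect :: "complex set" where
  "gen_defect = defect c (\<lambda>z. a1 * z) \<union> defect c (\<lambda>z. a2 * z)"

lemma norm_a1: "cmod a1 = 1" and norm_a2: "cmod a2 = 1"
  using a1 a2 by (auto simp: almost_rot_def)

lemma a1_nonzero: "a1 \<noteq> 0" and a2_nonzero: "a2 \<noteq> 0"
  using norm_a1 norm_a2 by auto

lemma finite_gen_defect: "finite gen_defect"
  using a1 a2 by (auto simp: almost_rot_def gen_defect_def)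

lemma act_norm: "cmod (act m n y) = cmod y"
  by (simp add: act_def norm_mult norm_power_int norm_a1 norm_a2)

lemma act_act: "act m n (act p q y) = act (m + p) (n + q) y"
  by (simp add: act_def power_int_add a1_nonzero a2_nonzero mult_ac)

lemma act_zero: "act 0 0 y = y"
  by (simp add: act_def)

lemma act_succ: "act (m + 1) n y = a1 * act m n y" "act m (n + 1) y = a2 * act m n y"
  by (simp_all add: act_def power_int_add a1_nonzero a2_nonzero mult_ac)

(* Independence makes the action free on nonzero points. *)
lemma act_inj:
  assumes "y \<noteq> 0" "act m n y = act m' n' y"
  shows "m = m' \<and> n = n'"
proof -
  have "a1 powi (m - m') * a2 powi (n - n') = (a1 powi m * a2 powi n) / (a1 powi m' * a2 powi n')"
    by (simp add: power_int_diff a1_nonzero a2_nonzero)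
  also have "\<dots> = 1" using assms by (simp add: act_def a1_nonzero a2_nonzero)
  finally show ?thesis using independent by force
qed

lemma inj_act: "y \<noteq> 0 \<Longrightarrow> inj (\<lambda>(m, n). act m n y)"
  by (auto simp: inj_def dest: act_inj)

lemma orbit_act: "act m n y \<in> orbit y"
  by (auto simp: orbit_def)

lemma orbitE:
  assumes "w \<in> orbit y" obtains m n where "w = act m n y"
  using assms by (auto simp: orbit_def)

lemma orbit_S1: "y \<in> S1 \<Longrightarrow> w \<in> orbit y \<Longrightarrow> w \<in> S1"
  by (auto simp: act_norm elim: orbitE)

lemma orbit_self: "y \<in> orbit y"
  using orbit_act[of 0 0 y] by (simp add: act_zero)

lemma orbit_eq:
  assumes "w \<in> orbit y" shows "orbit w = orbit y"
proof -
  obtain p q where w: "w = act p q y" using assms by (auto elim: orbitE)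
  have "act m n w \<in> orbit y" "act m n y \<in> orbit w" for m n
    using orbit_act[of "m + p" "n + q" y] orbit_act[of "m - p" "n - q" w]
    unfolding w act_act by simp_all
  then show ?thesis by (auto elim!: orbitE)
qed

lemma orbit_infinite: "y \<noteq> 0 \<Longrightarrow> infinite (orbit y)"
  unfolding orbit_def using inj_act finite_imageD infinite_UNIV_int
  by (metis finite_cartesian_productD1 UNIV_Times_UNIV UNIV_not_empty)

lemma O2_act:
  assumes "g \<in> O2"
  obtains s :: int where "s * s = 1" "\<And>m n y. g (act m n y) = act (s * m) (s * n) (g y)"
  using assms
proof (cases rule: O2_cases)
  case (1 b)
  then show ?thesis using that[of 1] by (simp add: act_def mult_ac)
next
  case (2 b)
  have "cnj (a powi k) = a powi (- k)" if "cmod a = 1" for a :: complex and k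
  proof -
    have "cnj a = inverse a" using that complex_norm_square[of a] by (simp add: inverse_unique)
    then show ?thesis by (simp add: power_int_inverse power_int_minus)
  qed
  then show ?thesis using that[of "-1"] 2 norm_a1 norm_a2
    by (simp add: act_def mult_ac del: complex_cnj_power_int)
qed

lemma orbit_O2:
  assumes "g \<in> O2" shows "orbit (g y) = g ` orbit y"
proof -
  obtain s :: int where s: "s * s = 1" "\<And>m n y. g (act m n y) = act (s * m) (s * n) (g y)"
    using O2_act[OF assms] by blast
  have reindex: "act m n (g y) = g (act (s * m) (s * n) y)" for m n
    using s by (simp add: mult.assoc[symmetric])
  have "act m n (g y) \<in> g ` orbit y" "g (act m n y) \<in> orbit (g y)" for m n
    using reindex[of m n] s(2)[of m n y] by (simp_all add: orbit_act)
  then show ?thesis by (auto elim!: orbitE)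
qed

lemma color_constant_outside_box:
  assumes y: "y \<in> S1"
    and bound: "\<And>m n. act m n y \<in> gen_defect \<Longrightarrow> \<bar>m\<bar> \<le> M \<and> \<bar>n\<bar> \<le> M"
    and outside: "M < \<bar>m\<bar> \<or> M < \<bar>n\<bar>"
  shows "c (act m n y) = c (act (M + 1) (M + 1) y)"
proof -
  have step: "c (a1 * act m n y) = c (act m n y) \<and> c (a2 * act m n y) = c (act m n y)"
    if "M < \<bar>m\<bar> \<or> M < \<bar>n\<bar>" for m n
  proof -
    have "act m n y \<notin> gen_defect" using bound that by force
    moreover have "act m n y \<in> S1" using y by (simp add: act_norm)
    ultimately show ?thesis by (auto simp: gen_defect_def defect_def)
  qed
  show ?thesis
    by (rule constant_outside_box[where beta = "\<lambda>m n. c (act m n y)", OF _ _ outside])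
      (simp_all add: act_succ step)
qed

lemma orbit_almost_monochromatic:
  assumes y: "y \<in> S1"
  shows "\<exists>v. finite {w\<in>orbit y. c w \<noteq> v}"
proof -
  define DefectIdx where "DefectIdx = (\<lambda>(m, n). act m n y) -` gen_defect"
  have "y \<noteq> 0" using y by auto
  then have "finite DefectIdx"
    unfolding DefectIdx_def using finite_gen_defect inj_act by (simp add: finite_vimageI)
  define M where "M = Max (insert 0 ((\<lambda>(m, n). max \<bar>m\<bar> \<bar>n\<bar>) ` DefectIdx))"
  have bound: "\<bar>m\<bar> \<le> M \<and> \<bar>n\<bar> \<le> M" if "act m n y \<in> gen_defect" for m n
  proof -
    have "(m, n) \<in> DefectIdx" using that by (simp add: DefectIdx_def)
    then have "max \<bar>m\<bar> \<bar>n\<bar> \<le> M"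
      unfolding M_def using \<open>finite DefectIdx\<close> by (intro Max_ge) (auto intro: rev_image_eqI)
    then show ?thesis by simp
  qed
  define v where "v = c (act (M + 1) (M + 1) y)"
  have "{w\<in>orbit y. c w \<noteq> v} \<subseteq> (\<lambda>(m, n). act m n y) ` ({-M..M} \<times> {-M..M})"
  proof
    fix w assume "w \<in> {w\<in>orbit y. c w \<noteq> v}"
    then obtain m n where w: "w = act m n y" "c (act m n y) \<noteq> v" by (auto elim: orbitE)
    then have "\<not> (M < \<bar>m\<bar> \<or> M < \<bar>n\<bar>)"
      using color_constant_outside_box[OF y bound] unfolding v_def by blast
    then show "w \<in> (\<lambda>(m, n). act m n y) ` ({-M..M} \<times> {-M..M})"
      unfolding w by (intro rev_image_eqI[of "(m, n)"]) auto
  qed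
  then show ?thesis by (intro exI[of _ v]) (rule finite_subset, auto)
qed

lemma orbit_monochromatic:
  assumes y: "y \<in> S1" and no_defect: "orbit y \<inter> gen_defect = {}" and w: "w \<in> orbit y"
  shows "c w = c y"
proof -
  obtain m n where "w = act m n y" using w by (auto elim: orbitE)
  moreover have "act m n y \<notin> gen_defect" for m n using no_defect orbit_act by blast
  moreover have "-1 < \<bar>m\<bar>" by arith
  ultimately show ?thesis
    using color_constant_outside_box[OF y, of "-1" m n] by (simp add: act_zero)
qed

lemma cofinitely_red_orbit: "y \<in> S1 \<Longrightarrow> w \<in> orbit y \<Longrightarrow> w \<in> cofinitely_red \<longleftrightarrow> y \<in> cofinitely_red"
  using orbit_eq orbit_S1 by (auto simp: cofinitely_red_def)

lemma exceptional_orbit_meets_defect: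
  assumes y_exc: "y \<in> exceptional"
  shows "orbit y \<inter> gen_defect \<noteq> {}"
proof
  have y: "y \<in> S1" using y_exc by (simp add: exceptional_def)
  assume "orbit y \<inter> gen_defect = {}"
  then have mono: "\<And>w. w \<in> orbit y \<Longrightarrow> c w = c y" using orbit_monochromatic[OF y] by blast
  show False
  proof (cases "c y = R")
    case True
    then have "{w\<in>orbit y. c w \<noteq> R} = {}" using mono by auto
    then have "finite {w\<in>orbit y. c w \<noteq> R}" by (simp only: finite.emptyI)
    then have "y \<in> cofinitely_red" using y unfolding cofinitely_red_def by blast
    then show False using True y_exc by (simp add: exceptional_def)
  next
    case False
    then have "{w\<in>orbit y. c w \<noteq> R} = orbit y" using mono by auto
    moreover have "infinite (orbit y)" using y orbit_infinite[of y] by fastforce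
    ultimately show False using False y y_exc by (simp add: exceptional_def cofinitely_red_def)
  qed
qed

lemma finite_orbit_exceptional:
  assumes e: "e \<in> S1"
  shows "finite (orbit e \<inter> exceptional)"
proof (cases "e \<in> cofinitely_red")
  case True
  then have "orbit e \<inter> exceptional \<subseteq> {w\<in>orbit e. c w \<noteq> R}"
    using cofinitely_red_orbit[OF e] by (auto simp: exceptional_def)
  then show ?thesis using True finite_subset by (auto simp: cofinitely_red_def)
next
  case False
  obtain v where v: "finite {w\<in>orbit e. c w \<noteq> v}" using orbit_almost_monochromatic[OF e] by blast
  then have "v \<noteq> R" using False e by (auto simp: cofinitely_red_def)
  then have "orbit e \<inter> exceptional \<subseteq> {w\<in>orbit e. c w \<noteq> v}"
    using cofinitely_red_orbit[OF e] False by (auto simp: exceptional_def)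
  then show ?thesis using v finite_subset by blast
qed

lemma finite_exceptional: "finite exceptional"
proof -
  have cover: "exceptional \<subseteq> (\<Union>e\<in>gen_defect. orbit e \<inter> exceptional)"
  proof
    fix y assume y: "y \<in> exceptional"
    then obtain e where e: "e \<in> orbit y" "e \<in> gen_defect"
      using exceptional_orbit_meets_defect by blast
    then have "y \<in> orbit e" using orbit_eq orbit_self by blast
    then show "y \<in> (\<Union>e\<in>gen_defect. orbit e \<inter> exceptional)" using e y by blast
  qed
  have "gen_defect \<subseteq> S1" by (auto simp: gen_defect_def defect_def)
  then have "finite (\<Union>e\<in>gen_defect. orbit e \<inter> exceptional)"
    using finite_gen_defect finite_orbit_exceptional by blast
  with cover show ?thesis using finite_subset by blast
qed

(* Almost-symmetries preserve the property of being cofinitely red, since they map orbits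
   to orbits and change colors only at finitely many points. *)
lemma cofinitely_red_invariant:
  assumes g: "g \<in> O2" "finite (defect c g)" and w: "w \<in> S1"
  shows "g w \<in> cofinitely_red \<longleftrightarrow> w \<in> cofinitely_red"
proof -
  let ?A = "{x\<in>orbit w. c (g x) \<noteq> R}" and ?B = "{x\<in>orbit w. c x \<noteq> R}"
  have "{x\<in>orbit (g w). c x \<noteq> R} = g ` ?A" using orbit_O2[OF g(1)] by auto
  then have "finite {x\<in>orbit (g w). c x \<noteq> R} \<longleftrightarrow> finite ?A"
    using O2_inj[OF g(1)] by (simp add: finite_image_iff inj_on_subset)
  also have "\<dots> \<longleftrightarrow> finite ?B"
  proof -
    have "?A \<subseteq> ?B \<union> defect c g" "?B \<subseteq> ?A \<union> defect c g"
      using orbit_S1[OF w] by (auto simp: defect_def)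
    then show ?thesis using g(2) finite_subset by (meson finite_Un)
  qed
  finally show ?thesis using w O2_maps_S1[OF g(1) w] by (simp add: cofinitely_red_def)
qed

lemma exceptional_recolor:
  assumes v: "v \<in> S1" and disj: "F \<inter> exceptional = {}"
  shows "v \<in> exceptional \<union> F \<longleftrightarrow> (recolor c F v = R) \<noteq> (v \<in> cofinitely_red)"
proof (cases "v \<in> F")
  case True
  then have "(c v = R) = (v \<in> cofinitely_red)" using v disj by (auto simp: exceptional_def)
  then show ?thesis using True by (cases "c v") (auto simp: recolor_def)
next
  case False
  then show ?thesis using v by (simp add: recolor_def exceptional_def)
qed

(* Hence any symmetry of the recoloring preserves exceptional \<union> F; choosing F as a rigid
   triple of this set makes the recoloring distinguishing. *)
lemma recoloring_exists:
  "\<exists>x y z. {x, y, z} \<subseteq> S1 \<and> distinguishing (recolor c {x, y, z})"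
proof -
  have "exceptional \<subseteq> S1" by (auto simp: exceptional_def)
  then obtain x y z where xyz: "{x, y, z} \<subseteq> S1 - ({} \<union> exceptional)"
    and T: "rigid_triple (exceptional \<union> {x, y, z}) x y z"
    using rigid_triple_exists[OF finite_exceptional _ countable_empty] by blast
  let ?F = "{x, y, z}"
  have disj: "?F \<inter> exceptional = {}" using xyz by auto
  have "g ` (exceptional \<union> ?F) \<subseteq> exceptional \<union> ?F" if g: "symmetry (recolor c ?F) g" for g
  proof (rule image_subsetI)
    fix w assume w: "w \<in> exceptional \<union> ?F"
    have g': "g \<in> O2" "finite (defect c g)"
      using g finite_defect_recolor_symmetry[OF g] by (auto simp: symmetry_def)
    have "w \<in> S1" using w xyz \<open>exceptional \<subseteq> S1\<close> by auto
    then have "g w \<in> S1" "recolor c ?F (g w) = recolor c ?F w"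
      using g O2_maps_S1[OF g'(1)] unfolding symmetry_def by auto
    then show "g w \<in> exceptional \<union> ?F"
      using w exceptional_recolor[OF _ disj] cofinitely_red_invariant[OF g' \<open>w \<in> S1\<close>] \<open>w \<in> S1\<close>
      by simp
  qed
  then have "distinguishing (recolor c ?F)"
    using recolor_rigid_triple_distinguishing T xyz \<open>exceptional \<subseteq> S1\<close> by auto
  then show ?thesis using xyz by blast
qed

end

theorem corollary2p5p1:
  fixes c :: "complex \<Rightarrow> color"
  shows "\<exists>c'. distinguishing c' \<and> finite {x\<in>S1. c x \<noteq> c' x} \<and> card {x\<in>S1. c x \<noteq> c' x} \<le> 3"
proof -
  obtain p q r where pqr: "{p, q, r} \<subseteq> S1" and dist: "distinguishing (recolor c {p, q, r})"
  proof (cases "countable (almost_sym c)")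
    case True
    then show ?thesis using recoloring_if_countable that by meson
  next
    case False
    obtain a1 a2 where "a1 \<in> almost_rot c" "a2 \<in> almost_rot c"
      and "\<forall>m n. a1 powi m * a2 powi n = 1 \<longrightarrow> m = 0 \<and> n = 0"
      using independent_pair[OF uncountable_almost_rot[OF False]] by blast
    then interpret independent_almost_rotations c a1 a2 by unfold_locales auto
    show ?thesis using recoloring_exists that by meson
  qed
  have "{x\<in>S1. c x \<noteq> recolor c {p, q, r} x} = {p, q, r}" by (rule recolor_changes[OF pqr])
  then show ?thesis using dist by (intro exI[of _ "recolor c {p, q, r}"]) (simp add: card_insert_if)
qed

end
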